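(* Let $n$ be a positive integer and $\alpha_0,\alpha_1,\dots,\alpha_n$ non-negative integers. Then $$\det_{0\le i,j\le n-1}\bigl(C_{\alpha_i+j}+C_{\alpha_{i+1}+j}\bigr)=\prod_{0\le i<j\le n}(\alpha_j-\alpha_i)\prod_{i=0}^{n-1}\frac{(i+n)!}{(2i)!}\prod_{i=0}^{n}\frac{(2\alpha_i)!}{\alpha_i!\,(\alpha_i+n)!}\times\sum_{s=0}^{n}\frac{\alpha_s!\,(\alpha_s+n)!}{(2\alpha_s)!\prod_{j=0}^{s-1}(\alpha_s-\alpha_j)\prod_{j=s+1}^{n}(\alpha_j-\alpha_s)}.$$
   Context: $C_m=\frac{1}{m+1}\binom{2m}{m}$ denotes the $m$-th Catalan number. *)

theory Defs
  imports Complex_Main "Jordan_Normal_Form.Determinant"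
begin

definition catalan :: "nat \<Rightarrow> rat" where
  "catalan m = (1 / of_nat (m + 1)) * of_nat ((2 * m) choose m)"

end

theory Submission
  imports Defs
begin

text \<open>
  With \<open>R\<^sub>i = (C\<^bsub>\<alpha>\<^sub>i+j\<^esub>)\<^sub>j\<close>, the \<open>i\<close>-th row of the matrix is \<open>R\<^sub>i + R\<^bsub>i+1\<^esub>\<close>, so by
  multilinearity its determinant is the sum over \<open>s\<close> of the \<open>n \<times> n\<close> minors of the
  \<open>(n+1) \<times> n\<close> matrix \<open>R\<close> with row \<open>s\<close> deleted. For \<open>j < n\<close> one has \<open>C\<^bsub>a+j\<^esub> = w(a) p\<^sub>j(a)\<close>
  with \<open>w(a) = (2a)! / (a! (a+n)!)\<close> and \<open>p\<^sub>j\<close> a polynomial of degree \<open>< n\<close>, so each minor is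
  \<open>\<Prod> w(\<alpha>\<^sub>i)\<close> times a Vandermonde determinant in the remaining \<open>\<alpha>\<^sub>i\<close> times the determinant
  of the coefficient matrix of \<open>p\<^sub>0, \<dots>, p\<^bsub>n-1\<^esub>\<close>. That constant is found by evaluating the
  \<open>p\<^sub>j\<close> at \<open>-1, \<dots>, -n\<close>, where the evaluation matrix is triangular.
\<close>

section \<open>Vandermonde determinants\<close>

definition vandermonde :: "nat \<Rightarrow> (nat \<Rightarrow> 'a::comm_ring_1) \<Rightarrow> 'a" where
  "vandermonde n x = (\<Prod>j<n. \<Prod>i<j. x j - x i)"

lemma vandermonde_Suc:
  "vandermonde (Suc n) x = (\<Prod>i<n. x (Suc i) - x 0) * vandermonde n (\<lambda>k. x (Suc k))"
proof -
  have "vandermonde (Suc n) x = (\<Prod>j<n. \<Prod>i<Suc j. x (Suc j) - x i)"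
    unfolding vandermonde_def by (subst prod.lessThan_Suc_shift) simp
  also have "\<dots> = (\<Prod>j<n. (x (Suc j) - x 0) * (\<Prod>i<j. x (Suc j) - x (Suc i)))"
    by (subst prod.lessThan_Suc_shift) simp
  finally show ?thesis
    unfolding vandermonde_def by (simp add: prod.distrib)
qed

lemma det_diagonal_mat:
  "det (mat n n (\<lambda>(i, j). if i = j then d i else 0)) = (\<Prod>i<n. d i)"
  by (subst det_upper_triangular[of _ n])
    (auto simp: upper_triangular_def prod_list_diag_prod atLeast0LessThan)

lemma diagonal_mat_mult:
  assumes "A \<in> carrier_mat n m"
  shows "mat n n (\<lambda>(i, j). if i = j then d i else 0) * A = mat n m (\<lambda>(i, j). d i * A $$ (i, j))"
  using assms
  by (intro eq_matI)
    (auto simp: scalar_prod_def sum.delta if_distrib[of "\<lambda>t. t * _"] atLeast0LessThan cong: if_cong)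

lemma sum_mult_upper_bidiagonal:
  fixes f :: "nat \<Rightarrow> 'a::comm_ring_1"
  assumes "m < N"
  shows "(\<Sum>i<N. f i * (if i = m then 1 else if Suc i = m then c else 0))
       = f m + (if m > 0 then c * f (m - 1) else 0)"
proof -
  have "(\<Sum>i<N. f i * (if i = m then 1 else if Suc i = m then c else 0))
     = (\<Sum>i<N. (if i = m then f i else 0) + (if i = m - 1 \<and> m > 0 then c * f i else 0))"
    by (rule sum.cong) auto
  also have "\<dots> = f m + (if m > 0 then c * f (m - 1) else 0)"
    using assms by (simp add: sum.distrib sum.delta)
  finally show ?thesis .
qed

lemma det_vandermonde_mat_Suc:
  fixes x :: "nat \<Rightarrow> 'a::comm_ring_1"
  shows "det (mat (Suc n) (Suc n) (\<lambda>(k, m). x k ^ m))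
    = (\<Prod>i<n. x (Suc i) - x 0) * det (mat n n (\<lambda>(k, m). x (Suc k) ^ m))"
proof -
  define V where "V = mat (Suc n) (Suc n) (\<lambda>(k, m). x k ^ m)"
  \<comment> \<open>Subtracting \<open>x\<^sub>0\<close> times each column from the next clears the first row of \<open>V\<close>.\<close>
  define U where "U = mat (Suc n) (Suc n)
    (\<lambda>(i, j). if i = j then 1 else if Suc i = j then - x 0 else 0)"
  have V: "V \<in> carrier_mat (Suc n) (Suc n)" and U: "U \<in> carrier_mat (Suc n) (Suc n)"
    unfolding V_def U_def by auto
  have "det U = 1"
    by (subst det_upper_triangular[of _ "Suc n"])
      (auto simp: U_def upper_triangular_def prod_list_diag_prod)
  then have det_VU: "det (V * U) = det V"
    using det_mult[OF V U] by simp
  have VU: "(V * U) $$ (k, m) = x k ^ m - (if m > 0 then x 0 * x k ^ (m - 1) else 0)"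
    if "k < Suc n" "m < Suc n" for k m
    using that sum_mult_upper_bidiagonal[OF that(2), of "\<lambda>i. x k ^ i" "- x 0"]
    by (simp add: V_def U_def scalar_prod_def atLeast0LessThan)
  have minor: "mat_delete (V * U) 0 0
    = mat n n (\<lambda>(i, j). if i = j then x (Suc i) - x 0 else 0) * mat n n (\<lambda>(k, m). x (Suc k) ^ m)"
  proof -
    have "mat_delete (V * U) 0 0 $$ (i, j) = (x (Suc i) - x 0) * x (Suc i) ^ j" if "i < n" "j < n" for i j
      using that V U VU[of "Suc i" "Suc j"] by (simp add: mat_delete_def algebra_simps)
    then show ?thesis
      using V U by (subst diagonal_mat_mult) (auto intro!: eq_matI)
  qed
  have "det (V * U) = (\<Sum>j<Suc n. (V * U) $$ (0, j) * cofactor (V * U) 0 j)"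
    by (rule laplace_expansion_row) (use V U in auto)
  also have "\<dots> = cofactor (V * U) 0 0"
    by (subst sum.lessThan_Suc_shift) (simp add: VU)
  also have "\<dots> = (\<Prod>i<n. x (Suc i) - x 0) * det (mat n n (\<lambda>(k, m). x (Suc k) ^ m))"
    by (simp add: cofactor_def minor det_mult[of _ n] det_diagonal_mat)
  finally show ?thesis
    using det_VU by (simp add: V_def)
qed

lemma det_vandermonde_mat:
  fixes x :: "nat \<Rightarrow> 'a::comm_ring_1"
  shows "det (mat n n (\<lambda>(k, m). x k ^ m)) = vandermonde n x"
proof (induction n arbitrary: x)
  case 0
  then show ?case by (simp add: vandermonde_def det_def)
next
  case (Suc n)
  then show ?case by (simp add: det_vandermonde_mat_Suc vandermonde_Suc)
qed

lemma det_poly_eval_mat: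
  fixes p :: "nat \<Rightarrow> 'a::comm_ring_1 poly"
  assumes "\<And>j. j < n \<Longrightarrow> degree (p j) < n"
  shows "det (mat n n (\<lambda>(k, j). poly (p j) (x k)))
    = vandermonde n x * det (mat n n (\<lambda>(m, j). coeff (p j) m))"
proof -
  have poly_p: "poly (p j) y = (\<Sum>m<n. coeff (p j) m * y ^ m)" if "j < n" for j y
    unfolding poly_altdef using assms[OF that]
    by (intro sum.mono_neutral_left) (auto simp: coeff_eq_0)
  have "mat n n (\<lambda>(k, j). poly (p j) (x k))
      = mat n n (\<lambda>(k, m). x k ^ m) * mat n n (\<lambda>(m, j). coeff (p j) m)"
    by (rule eq_matI) (auto simp: scalar_prod_def poly_p atLeast0LessThan mult_ac)
  then show ?thesis
    by (simp add: det_mult[of _ n] det_vandermonde_mat)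
qed

lemma insert_index_image_lessThan: "insert_index s ` {..<j} = {..<insert_index s j} - {s}"
proof
  show "{..<insert_index s j} - {s} \<subseteq> insert_index s ` {..<j}"
  proof
    fix i
    assume "i \<in> {..<insert_index s j} - {s}"
    then have "i = insert_index s (if i < s then i else i - 1)" "(if i < s then i else i - 1) < j"
      by (auto simp: insert_index_def split: if_splits)
    then show "i \<in> insert_index s ` {..<j}"
      by blast
  qed
qed (auto simp: insert_index_def)

lemma prod_insert_index:
  assumes "s \<le> n"
  shows "(\<Prod>i<n. f (insert_index s i)) = (\<Prod>i\<in>{..n} - {s}. f i)"
proof -
  have "{..n} - {s} = insert_index s ` {..<n}"
    using insert_index_image[of s n] assms by (simp add: atLeast0LessThan lessThan_Suc_atMost)
  then show ?thesis
    by (simp add: prod.reindex insert_index_inj_on)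
qed

lemma vandermonde_insert_index:
  assumes "s \<le> n"
  shows "vandermonde n (\<lambda>i. x (insert_index s i)) = (\<Prod>j\<in>{..n} - {s}. \<Prod>i\<in>{..<j} - {s}. x j - x i)"
proof -
  have "vandermonde n (\<lambda>i. x (insert_index s i))
      = (\<Prod>j<n. \<Prod>i\<in>{..<insert_index s j} - {s}. x (insert_index s j) - x i)"
    unfolding vandermonde_def insert_index_image_lessThan[symmetric]
    by (simp add: prod.reindex insert_index_inj_on)
  also have "\<dots> = (\<Prod>j\<in>{..n} - {s}. \<Prod>i\<in>{..<j} - {s}. x j - x i)"
    using assms by (rule prod_insert_index)
  finally show ?thesis .
qed

section \<open>Deleting one of n + 1 rows\<close>

text \<open>
  Laplace expansion along the first column \<open>((-1)\<^sup>k)\<^sub>k\<close> yields every minor with sign \<open>+1\<close>;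
  adding each row to the previous one clears that column except in the last row.
\<close>

definition sign_bordered_mat :: "nat \<Rightarrow> (nat \<Rightarrow> nat \<Rightarrow> 'a::comm_ring_1) \<Rightarrow> 'a mat" where
  "sign_bordered_mat n R = mat (Suc n) (Suc n) (\<lambda>(k, j). if j = 0 then (-1) ^ k else R k (j - 1))"

lemma sign_bordered_mat_index:
  "k < Suc n \<Longrightarrow> j < Suc n \<Longrightarrow>
    sign_bordered_mat n R $$ (k, j) = (if j = 0 then (-1) ^ k else R k (j - 1))"
  by (simp add: sign_bordered_mat_def)

lemma det_sign_bordered_mat_eq_sum_minors:
  "det (sign_bordered_mat n R) = (\<Sum>s\<le>n. det (mat n n (\<lambda>(i, j). R (insert_index s i) j)))"
proof -
  let ?G = "sign_bordered_mat n R"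
  have G: "?G \<in> carrier_mat (Suc n) (Suc n)"
    by (simp add: sign_bordered_mat_def)
  have minor: "mat_delete ?G s 0 = mat n n (\<lambda>(i, j). R (insert_index s i) j)" for s
    by (rule eq_matI) (auto simp: mat_delete_def sign_bordered_mat_def insert_index_def)
  have "det ?G = (\<Sum>s<Suc n. ?G $$ (s, 0) * cofactor ?G s 0)"
    by (rule laplace_expansion_column[OF G]) simp
  also have "\<dots> = (\<Sum>s<Suc n. det (mat n n (\<lambda>(i, j). R (insert_index s i) j)))"
    by (rule sum.cong) (auto simp: sign_bordered_mat_index cofactor_def minor simp flip: power_add)
  finally show ?thesis
    by (simp add: lessThan_Suc_atMost)
qed

lemma sum_upper_bidiagonal_mult:
  fixes f :: "nat \<Rightarrow> 'a::comm_ring_1"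
  assumes "k < N"
  shows "(\<Sum>l<N. (if k = l \<or> Suc k = l then 1 else 0) * f l) = f k + (if Suc k < N then f (Suc k) else 0)"
proof -
  have "(\<Sum>l<N. (if k = l \<or> Suc k = l then 1 else 0) * f l)
      = (\<Sum>l<N. (if l = k then f l else 0) + (if l = Suc k then f l else 0))"
    by (rule sum.cong) auto
  also have "\<dots> = f k + (if Suc k < N then f (Suc k) else 0)"
    using assms by (simp add: sum.distrib sum.delta)
  finally show ?thesis .
qed

lemma det_sign_bordered_mat_eq_adjacent_sums:
  "det (sign_bordered_mat n R) = det (mat n n (\<lambda>(i, j). R i j + R (Suc i) j))"
proof -
  let ?G = "sign_bordered_mat n R"
  define L :: "'a mat" where "L = mat (Suc n) (Suc n) (\<lambda>(i, j). if i = j \<or> Suc i = j then 1 else 0)"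
  have G: "?G \<in> carrier_mat (Suc n) (Suc n)" and L: "L \<in> carrier_mat (Suc n) (Suc n)"
    by (simp_all add: sign_bordered_mat_def L_def)
  have LG_carrier: "L * ?G \<in> carrier_mat (Suc n) (Suc n)"
    using L G by simp
  have "det L = 1"
    by (subst det_upper_triangular[of _ "Suc n"]) (auto simp: L_def upper_triangular_def prod_list_diag_prod)
  then have det_LG: "det (L * ?G) = det ?G"
    using det_mult[OF L G] by simp
  have LG: "(L * ?G) $$ (k, m) = ?G $$ (k, m) + (if Suc k < Suc n then ?G $$ (Suc k, m) else 0)"
    if "k < Suc n" "m < Suc n" for k m
    using that G sum_upper_bidiagonal_mult[OF that(1), of "\<lambda>l. ?G $$ (l, m)"]
    by (simp add: L_def scalar_prod_def atLeast0LessThan)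
  have "det (L * ?G) = (\<Sum>k<Suc n. (L * ?G) $$ (k, 0) * cofactor (L * ?G) k 0)"
    by (rule laplace_expansion_column[OF LG_carrier]) simp
  also have "\<dots> = (L * ?G) $$ (n, 0) * cofactor (L * ?G) n 0"
    by (simp add: LG sign_bordered_mat_index)
  also have "\<dots> = det (mat_delete (L * ?G) n 0)"
    by (simp add: LG sign_bordered_mat_index cofactor_def flip: power_add)
  also have "mat_delete (L * ?G) n 0 = mat n n (\<lambda>(i, j). R i j + R (Suc i) j)"
    by (rule eq_matI) (use LG_carrier in \<open>auto simp: mat_delete_def LG sign_bordered_mat_index simp del: index_mult_mat\<close>)
  finally show ?thesis
    using det_LG by simp
qed

lemma det_adjacent_row_sums:
  "det (mat n n (\<lambda>(i, j). R i j + R (Suc i) j))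
    = (\<Sum>s\<le>n. det (mat n n (\<lambda>(i, j). R (insert_index s i) j)))"
  unfolding det_sign_bordered_mat_eq_adjacent_sums[symmetric] by (rule det_sign_bordered_mat_eq_sum_minors)

section \<open>Factorial identities\<close>

lemma fact_double_add:
  "fact (2 * a + 2 * j) * fact a
    = (fact (2 * a) * fact (a + j) * 2 ^ j * (\<Prod>k<j. 2 * of_nat a + of_nat (2 * k + 1))
        :: 'a::field_char_0)"
proof (induction j)
  case 0
  then show ?case by simp
next
  case (Suc j)
  have "fact (2 * a + 2 * Suc j) * fact a
      = (fact (2 * a + 2 * j) * fact a) * (of_nat (2 * a + 2 * j + 1) * of_nat (2 * a + 2 * j + 2) :: 'a)"
    by (simp add: algebra_simps)
  also have "\<dots> = fact (2 * a) * (of_nat (a + j + 1) * fact (a + j)) * 2 ^ Suc j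
      * ((\<Prod>k<j. 2 * of_nat a + of_nat (2 * k + 1)) * (2 * of_nat a + of_nat (2 * j + 1)))"
    using Suc by (simp add: algebra_simps)
  finally show ?case by simp
qed

lemma fact_add_eq_prod:
  "fact (b + d) = (fact b * (\<Prod>m<d. of_nat (b + Suc m)) :: 'a::{comm_semiring_1, semiring_char_0})"
  by (induction d) (simp_all add: algebra_simps)

lemma fact_odd_eq_prod:
  "(fact (2 * j + 1) :: 'a::field_char_0) = 2 ^ j * (\<Prod>k<j. of_nat (2 * k + 3)) * fact j"
  by (induction j) (simp_all add: algebra_simps)

lemma prod_of_nat_minus_self:
  "(\<Prod>i<j. of_nat i - of_nat j :: 'a::{comm_ring_1, semiring_char_0}) = (-1) ^ j * fact j"
proof -
  have "(\<Prod>i<j. of_nat i - of_nat j :: 'a) = (\<Prod>i<j. of_nat (j - Suc i) - of_nat j)"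
    by (rule prod.nat_diff_reindex[symmetric])
  also have "\<dots> = (\<Prod>i<j. - 1 * of_nat (Suc i))"
    by (rule prod.cong) (auto simp: of_nat_diff algebra_simps)
  also have "\<dots> = (-1) ^ j * (\<Prod>i<j. of_nat (Suc i))"
    by (simp only: prod.distrib prod_constant card_lessThan)
  finally show ?thesis
    by (simp add: fact_prod_Suc lessThan_atLeast0)
qed

lemma prod_fact_double_lessThan:
  "(\<Prod>m<2 * n. fact m :: 'a::{comm_semiring_1, semiring_char_0})
    = (\<Prod>j<n. fact (2 * j) * fact (2 * j + 1))"
  by (induction n) (simp_all add: mult_ac)

lemma prod_fact_double_lessThan_split:
  "(\<Prod>m<2 * n. fact m :: 'a::{comm_semiring_1, semiring_char_0})
    = (\<Prod>j<n. fact j) * (\<Prod>j<n. fact (j + n))"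
proof -
  have "(\<Prod>m<2 * n. fact m :: 'a) = (\<Prod>m\<in>{0..<n}. fact m) * (\<Prod>m\<in>{n..<2 * n}. fact m)"
    by (simp add: prod.atLeastLessThan_concat atLeast0LessThan[symmetric])
  also have "(\<Prod>m\<in>{n..<2 * n}. fact m :: 'a) = (\<Prod>j<n. fact (j + n))"
    using prod.shift_bounds_nat_ivl[of fact 0 n n] by (simp add: mult_2 atLeast0LessThan)
  finally show ?thesis by (simp add: atLeast0LessThan)
qed

lemma prod_fact_odd_div_fact:
  "(\<Prod>j<n. fact (2 * j + 1) / fact j :: 'a::field_char_0) = (\<Prod>i<n. fact (i + n) / fact (2 * i))"
  using prod_fact_double_lessThan[of n, where 'a = 'a] prod_fact_double_lessThan_split[of n, where 'a = 'a]
  by (simp add: prod_dividef prod.distrib divide_simps mult_ac)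

section \<open>Catalan numbers as values of polynomials\<close>

lemma catalan_eq_fact: "catalan m = fact (2 * m) / (fact m * fact (Suc m))"
proof -
  have "fact (2 * m) = (fact m * fact m * of_nat (2 * m choose m) :: rat)"
    by (subst binomial_fact) (auto simp: mult_2)
  then show ?thesis
    by (simp add: catalan_def divide_simps)
qed

definition catalan_weight :: "nat \<Rightarrow> nat \<Rightarrow> rat" where
  "catalan_weight n a = fact (2 * a) / (fact a * fact (a + n))"

text \<open>
  The two products collect the factors of \<open>(2a+2j)! a! / ((2a)! (a+j)!)\<close> and of
  \<open>(a+n)! / (a+j+1)!\<close> as polynomials in \<open>a\<close>.
\<close>

definition catalan_poly :: "nat \<Rightarrow> nat \<Rightarrow> rat poly" where
  "catalan_poly n j = smult (2 ^ j) (\<Prod>k<j. [:of_nat (2 * k + 1), 2:])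
     * (\<Prod>m<n - j - 1. [:of_nat (j + 2 + m), 1:])"

lemma poly_catalan_poly:
  "poly (catalan_poly n j) x
    = 2 ^ j * (\<Prod>k<j. 2 * x + of_nat (2 * k + 1)) * (\<Prod>m<n - j - 1. x + of_nat (j + 2 + m))"
  by (simp add: catalan_poly_def poly_prod algebra_simps)

lemma degree_prod_linear_le: "degree (\<Prod>k<j. [:c k, d k:]) \<le> j"
  by (rule order.trans[OF degree_prod_sum_le]) (auto intro: order.trans[OF sum_mono[of _ _ "\<lambda>_. 1"]])

lemma degree_catalan_poly:
  assumes "j < n"
  shows "degree (catalan_poly n j) < n"
proof -
  have "degree (catalan_poly n j) \<le> j + (n - j - 1)"
    unfolding catalan_poly_def
    by (rule order.trans[OF degree_mult_le] add_mono order.trans[OF degree_smult_le] degree_prod_linear_le)+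
  then show ?thesis using assms by linarith
qed

lemma catalan_eq_weight_poly:
  assumes "j < n"
  shows "catalan (a + j) = catalan_weight n a * poly (catalan_poly n j) (of_nat a)"
proof -
  define P where "P = (\<Prod>k<j. 2 * of_nat a + of_nat (2 * k + 1) :: rat)"
  define Q where "Q = (\<Prod>m<n - j - 1. of_nat a + of_nat (j + 2 + m) :: rat)"
  have "fact (a + n) = (fact (a + j + 1 + (n - j - 1)) :: rat)"
    using assms by simp
  also have "\<dots> = fact (a + j + 1) * Q"
    unfolding fact_add_eq_prod Q_def by (simp add: algebra_simps)
  finally have fact_n: "fact (a + n) = fact (a + j + 1) * Q" .
  have fact_2j: "fact (2 * a + 2 * j) * fact a = fact (2 * a) * fact (a + j) * 2 ^ j * P"
    unfolding P_def by (rule fact_double_add)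
  have "Q \<noteq> 0"
    using fact_n by auto
  then have "catalan_weight n a * poly (catalan_poly n j) (of_nat a)
      = fact (2 * a) * 2 ^ j * P / (fact a * fact (a + j + 1))"
    by (simp add: catalan_weight_def poly_catalan_poly fact_n P_def Q_def)
  also have "\<dots> = fact (2 * (a + j)) / (fact (a + j) * fact (Suc (a + j)))"
    using fact_2j by (simp add: divide_simps ac_simps del: fact_Suc)
  finally show ?thesis
    by (simp add: catalan_eq_fact)
qed

lemma poly_catalan_poly_neg_below:
  assumes "j < k" "k < n"
  shows "poly (catalan_poly n j) (- of_nat (Suc k)) = 0"
proof -
  have "(\<Prod>m<n - j - 1. - of_nat (Suc k) + of_nat (j + 2 + m) :: rat) = 0"
    using assms by (intro prod_zero bexI[of _ "k - j - 1"]) auto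
  then show ?thesis
    by (simp add: poly_catalan_poly)
qed

lemma poly_catalan_poly_neg_diag:
  "poly (catalan_poly n j) (- of_nat (Suc j)) = (-1) ^ j * (fact (2 * j + 1) / fact j) * fact (n - Suc j)"
proof -
  have "(\<Prod>k<j. 2 * - of_nat (Suc j) + of_nat (2 * k + 1) :: rat)
      = (\<Prod>k<j. 2 * - of_nat (Suc j) + of_nat (2 * (j - Suc k) + 1))"
    by (rule prod.nat_diff_reindex[symmetric])
  also have "\<dots> = (\<Prod>k<j. - 1 * of_nat (2 * k + 3))"
    by (rule prod.cong) (auto simp: of_nat_diff algebra_simps)
  also have "\<dots> = (-1) ^ j * (\<Prod>k<j. of_nat (2 * k + 3))"
    by (simp only: prod.distrib prod_constant card_lessThan)
  finally have odd: "(\<Prod>k<j. 2 * - of_nat (Suc j) + of_nat (2 * k + 1) :: rat)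
      = (-1) ^ j * (fact (2 * j + 1) / fact j) / 2 ^ j"
    by (simp only: fact_odd_eq_prod) simp
  have "(\<Prod>m<n - j - 1. - of_nat (Suc j) + of_nat (j + 2 + m) :: rat) = (\<Prod>m<n - Suc j. of_nat (Suc m))"
    by (rule prod.cong) auto
  also have "\<dots> = fact (n - Suc j)"
    by (simp add: fact_prod_Suc lessThan_atLeast0)
  finally have shifted: "(\<Prod>m<n - j - 1. - of_nat (Suc j) + of_nat (j + 2 + m) :: rat) = fact (n - Suc j)" .
  show ?thesis
    unfolding poly_catalan_poly odd shifted by simp
qed

definition catalan_coeff_mat :: "nat \<Rightarrow> rat mat" where
  "catalan_coeff_mat n = mat n n (\<lambda>(m, j). coeff (catalan_poly n j) m)"

lemma det_catalan_poly_eval_mat: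
  "det (mat n n (\<lambda>(k, j). poly (catalan_poly n j) (x k))) = vandermonde n x * det (catalan_coeff_mat n)"
  unfolding catalan_coeff_mat_def by (rule det_poly_eval_mat) (rule degree_catalan_poly)

lemma det_catalan_coeff_mat: "det (catalan_coeff_mat n) = (\<Prod>i<n. fact (i + n) / fact (2 * i))"
proof -
  \<comment> \<open>At these points \<open>p\<^sub>j\<close> vanishes below the diagonal.\<close>
  define x :: "nat \<Rightarrow> rat" where "x k = - of_nat (Suc k)" for k
  define M where "M = mat n n (\<lambda>(k, j). poly (catalan_poly n j) (x k))"
  have "poly (catalan_poly n j) (x k) = 0" if "j < k" "k < n" for j k
    unfolding x_def using that by (rule poly_catalan_poly_neg_below)
  then have "upper_triangular M"
    by (auto simp: upper_triangular_def M_def)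
  then have "det M = (\<Prod>j<n. poly (catalan_poly n j) (x j))"
    by (subst det_upper_triangular[of _ n]) (auto simp: M_def prod_list_diag_prod atLeast0LessThan)
  also have "\<dots> = (\<Prod>j<n. (-1) ^ j * (fact (2 * j + 1) / fact j) * fact (n - Suc j))"
    unfolding x_def poly_catalan_poly_neg_diag ..
  also have "\<dots> = (\<Prod>j<n. (-1) ^ j * (fact (2 * j + 1) / fact j)) * (\<Prod>j<n. fact (n - Suc j))"
    by (simp only: prod.distrib)
  also have "(\<Prod>j<n. fact (n - Suc j)) = (\<Prod>j<n. fact j :: rat)"
    by (rule prod.nat_diff_reindex)
  also have "(\<Prod>j<n. (-1) ^ j * (fact (2 * j + 1) / fact j)) * (\<Prod>j<n. fact j)
      = (\<Prod>j<n. (-1) ^ j * fact j) * (\<Prod>j<n. fact (2 * j + 1) / fact j :: rat)"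
    by (simp only: prod.distrib mult_ac)
  finally have det_M: "det M = (\<Prod>j<n. (-1) ^ j * fact j) * (\<Prod>j<n. fact (2 * j + 1) / fact j)" .
  have "vandermonde n x = (\<Prod>j<n. (-1) ^ j * fact j)"
    unfolding vandermonde_def x_def by (simp add: prod_of_nat_minus_self)
  moreover have "det M = vandermonde n x * det (catalan_coeff_mat n)"
    unfolding M_def by (rule det_catalan_poly_eval_mat)
  ultimately have "det (catalan_coeff_mat n) = (\<Prod>j<n. fact (2 * j + 1) / fact j)"
    using det_M by simp
  also have "\<dots> = (\<Prod>i<n. fact (i + n) / fact (2 * i))"
    by (rule prod_fact_odd_div_fact)
  finally show ?thesis .
qed

lemma det_catalan_shifted_mat:
  "det (mat n n (\<lambda>(i, j). catalan (a i + j)))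
    = (\<Prod>i<n. catalan_weight n (a i)) * vandermonde n (\<lambda>i. of_nat (a i))
      * (\<Prod>i<n. fact (i + n) / fact (2 * i))"
proof -
  have "mat n n (\<lambda>(i, j). catalan (a i + j))
      = mat n n (\<lambda>(i, j). if i = j then catalan_weight n (a i) else 0)
        * mat n n (\<lambda>(k, j). poly (catalan_poly n j) (of_nat (a k)))"
    by (subst diagonal_mat_mult) (auto intro!: eq_matI simp: catalan_eq_weight_poly)
  then show ?thesis
    by (simp add: det_mult[of _ n] det_diagonal_mat det_catalan_poly_eval_mat det_catalan_coeff_mat)
qed

theorem corollary5:
  fixes n :: nat and \<alpha> :: "nat \<Rightarrow> nat"
  assumes "n \<ge> 1"
  shows "det (mat n n (\<lambda>(i, j). catalan (\<alpha> i + j) + catalan (\<alpha> (i + 1) + j)))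
    = (\<Prod>i<n. fact (i + n) / fact (2 * i))
      * (\<Prod>i\<le>n. fact (2 * \<alpha> i) / (fact (\<alpha> i) * fact (\<alpha> i + n)))
      * (\<Sum>s\<le>n. (\<Prod>j\<in>{..n} - {s}. \<Prod>i\<in>{..<j} - {s}. (of_nat (\<alpha> j) - of_nat (\<alpha> i)))
                   * (fact (\<alpha> s) * fact (\<alpha> s + n) / fact (2 * \<alpha> s)))"
  \<comment> \<open>The identity also holds for \<open>n = 0\<close> (both sides are 1).\<close>
proof -
  define c where "c = (\<Prod>i<n. fact (i + n) / fact (2 * i) :: rat)"
  define W where "W = (\<Prod>i\<le>n. catalan_weight n (\<alpha> i))"
  define V where "V s = (\<Prod>j\<in>{..n} - {s}. \<Prod>i\<in>{..<j} - {s}. (of_nat (\<alpha> j) - of_nat (\<alpha> i) :: rat))" for s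
  have minor: "det (mat n n (\<lambda>(i, j). catalan (\<alpha> (insert_index s i) + j)))
      = c * W * (V s / catalan_weight n (\<alpha> s))" if "s \<le> n" for s
  proof -
    have "W = catalan_weight n (\<alpha> s) * (\<Prod>i\<in>{..n} - {s}. catalan_weight n (\<alpha> i))"
      unfolding W_def using that by (simp add: prod.remove)
    moreover have "catalan_weight n (\<alpha> s) \<noteq> 0"
      by (simp add: catalan_weight_def)
    ultimately show ?thesis
      using that prod_insert_index[OF that, of "\<lambda>i. catalan_weight n (\<alpha> i)"]
        vandermonde_insert_index[OF that, of "\<lambda>i. of_nat (\<alpha> i) :: rat"]
      by (simp add: det_catalan_shifted_mat c_def V_def)
  qed
  have "det (mat n n (\<lambda>(i, j). catalan (\<alpha> i + j) + catalan (\<alpha> (i + 1) + j)))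
      = (\<Sum>s\<le>n. c * W * (V s / catalan_weight n (\<alpha> s)))"
    using det_adjacent_row_sums[of n "\<lambda>i j. catalan (\<alpha> i + j)"] minor by simp
  then show ?thesis
    by (simp add: sum_distrib_left c_def W_def V_def catalan_weight_def)
qed

end
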